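(* Let $\Sigma$ be a finite alphabet, let $y^* = y^*_1 \cdots y^*_n \in \Sigma^*$, let $p \in \Sigma^*$, and let $m(p) = \min_{0 \le j \le n} D(p, y^*_{1..j})$. For a symbol $a \in \Sigma$ define the optimal Q-value $$Q^*(p, a) \;=\; \max_{s \in \Sigma^*} \bigl(-D(p\,a\,s,\; y^* )\bigr).$$ Then $$Q^*(p,a) \;=\; \begin{cases} -m(p) & \text{if there exists } j \in \{0,\dots,n-1\} \text{ with } D(p, y^*_{1..j}) = m(p) \text{ and } y^*_{j+1} = a,\\[2pt] -m(p) - 1 & \text{otherwise.}\end{cases}$$ Furthermore, terminating immediately (i.e. choosing the empty suffix, giving value $-D(p,y^* )$) attains the value $-m(p)$ if and only if $D(p, y^* ) = m(p)$, and otherwise has value at most $-m(p)-1$.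
   Context: $D(u,v)$ denotes the Levenshtein edit distance between finite strings $u,v$: the minimum number of single-symbol insertions, deletions and substitutions needed to transform $u$ into $v$. For a string $y^*$ of length $n$, $y^*_{1..j}$ denotes its prefix of length $j$ ($y^*_{1..0}$ is the empty string). Juxtaposition $p\,a\,s$ denotes concatenation of the string $p$, the single symbol $a$, and the string $s$. *)

theory Defs
  imports Main
begin

definition edit1 :: "'a list \<Rightarrow> 'a list \<Rightarrow> bool" where
  "edit1 u v \<longleftrightarrow>
     (\<exists>p s b. u = p @ s \<and> v = p @ b # s) \<or>
     (\<exists>p s b. u = p @ b # s \<and> v = p @ s) \<or>
     (\<exists>p s b c. u = p @ b # s \<and> v = p @ c # s)"

definition lev :: "'a list \<Rightarrow> 'a list \<Rightarrow> nat" where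
  "lev u v = (LEAST k. (edit1 ^^ k) u v)"

definition mval :: "'a list \<Rightarrow> 'a list \<Rightarrow> nat" where
  "mval p ystar = Min {lev p (take j ystar) | j. j \<le> length ystar}"

definition Qstar :: "'a set \<Rightarrow> 'a list \<Rightarrow> 'a list \<Rightarrow> 'a \<Rightarrow> int" where
  "Qstar \<Sigma> ystar p a = (GREATEST q. \<exists>s \<in> lists \<Sigma>. q = - int (lev (p @ a # s) ystar))"

end

theory Submission
  imports Defs
begin

text \<open>Any word p a s splits against y* as p against a prefix y*_{1..j} plus a s against the
  rest; conversely an optimal alignment of p a s with y* restricts to an alignment of p with some
  prefix of y*, so D(p a s, y*) \<ge> m(p). Equality needs the symbol a to be matched for free, which
  is possible exactly when a = y*_{j+1} for an optimal j; otherwise a costs one edit, and one edit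
  always suffices (insert a after an optimal prefix, then copy the rest of y*).
  Both bounds are read off the Wagner-Fischer recursion, which the relational definition of D
  satisfies, together with its mirror image obtained from the reversal symmetry of D.\<close>

fun lev_rec :: "'a list \<Rightarrow> 'a list \<Rightarrow> nat" where
  "lev_rec [] w = length w"
| "lev_rec (x # u) [] = Suc (length u)"
| "lev_rec (x # u) (y # w) =
     min (min (lev_rec u w + (if x = y then 0 else 1)) (lev_rec u (y # w) + 1)) (lev_rec (x # u) w + 1)"

lemma lev_rec_Nil_right [simp]: "lev_rec u [] = length u"
  by (cases u) auto

lemma lev_rec_self [simp]: "lev_rec v v = 0"
  by (induction v) auto

lemma lev_rec_Cons_right_le: "lev_rec u (y # w) \<le> Suc (lev_rec u w)"
  by (induction u) auto

lemma lev_rec_Cons_left_le: "lev_rec (b # s) w \<le> Suc (lev_rec s w)"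
  by (cases w; cases s) auto

lemma lev_rec_le_Cons_left: "lev_rec s w \<le> Suc (lev_rec (b # s) w)"
proof (induction w)
  case Nil
  then show ?case by (cases s) auto
next
  case (Cons y w)
  then show ?case using lev_rec_Cons_right_le[of s y w] by auto
qed

lemma lev_rec_Cons_subst_le: "lev_rec (b # s) w \<le> Suc (lev_rec (c # s) w)"
  by (induction w) auto

lemma lev_rec_Cons_lift:
  assumes "\<And>w. lev_rec u w \<le> Suc (lev_rec v w)"
  shows "lev_rec (x # u) w \<le> Suc (lev_rec (x # v) w)"
proof (induction w)
  case Nil
  then show ?case using assms[of "[]"] by (cases u; cases v) auto
next
  case (Cons y w)
  then show ?case using assms[of w] assms[of "y # w"] by auto
qed

lemma lev_rec_edit1_le:
  assumes "edit1 u v"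
  shows "lev_rec u w \<le> Suc (lev_rec v w)"
proof -
  have "lev_rec (p @ s) w \<le> Suc (lev_rec (p @ b # s) w)"
    and "lev_rec (p @ b # s) w \<le> Suc (lev_rec (p @ s) w)"
    and "lev_rec (p @ b # s) w \<le> Suc (lev_rec (p @ c # s) w)"
    for p s b c and w :: "'a list"
    by (induction p arbitrary: w)
       (simp_all add: lev_rec_le_Cons_left lev_rec_Cons_left_le lev_rec_Cons_subst_le
                      lev_rec_Cons_lift)
  then show ?thesis using assms unfolding edit1_def by blast
qed

lemma lev_rec_le_relpowp: "(edit1 ^^ k) u v \<Longrightarrow> lev_rec u v \<le> k"
proof (induction k arbitrary: u)
  case 0
  then show ?case by simp
next
  case (Suc k)
  then obtain w where "edit1 u w" "(edit1 ^^ k) w v" by (blast elim: relpowp_Suc_E2)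
  with Suc.IH lev_rec_edit1_le[of u w v] show ?case by fastforce
qed

lemma edit1_Cons_Cons: "edit1 (x # w) (y # w)"
  and edit1_insert_Cons: "edit1 w (y # w)"
  and edit1_delete_Cons: "edit1 (y # w) w"
  unfolding edit1_def by (metis append_Nil)+

lemma edit1_append_context: "edit1 u v \<Longrightarrow> edit1 (c @ u @ d) (c @ v @ d)"
  unfolding edit1_def by (elim disjE exE conjE; simp) (metis append.assoc append_Cons)+

lemma relpowp_edit1_append_context: "(edit1 ^^ k) u v \<Longrightarrow> (edit1 ^^ k) (c @ u @ d) (c @ v @ d)"
proof (induction k arbitrary: v)
  case (Suc k)
  then obtain w where "(edit1 ^^ k) u w" "edit1 w v" by (blast elim: relpowp_Suc_E)
  then show ?case using Suc.IH edit1_append_context by (blast intro: relpowp_Suc_I)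
qed simp

lemma relpowp_edit1_Nil_length: "(edit1 ^^ length w) [] w"
  by (induction w) (metis list.size(3) relpowp_0_I, metis length_Cons relpowp_Suc_I edit1_insert_Cons)

lemma relpowp_edit1_length_Nil: "(edit1 ^^ length u) u []"
  by (induction u) (metis list.size(3) relpowp_0_I, metis length_Cons relpowp_Suc_I2 edit1_delete_Cons)

lemma relpowp_edit1_lev_rec: "\<exists>k \<le> lev_rec u v. (edit1 ^^ k) u v"
proof (induction u v rule: lev_rec.induct)
  case (1 w)
  show ?case unfolding lev_rec.simps using relpowp_edit1_Nil_length by blast
next
  case (2 x u)
  have "(edit1 ^^ Suc (length u)) (x # u) []"
    using edit1_delete_Cons relpowp_edit1_length_Nil by (rule relpowp_Suc_I2)
  then show ?case unfolding lev_rec.simps by blast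
next
  case (3 x u y w)
  obtain k1 where k1: "k1 \<le> lev_rec u w" "(edit1 ^^ k1) u w" using 3(1) by blast
  obtain k2 where k2: "k2 \<le> lev_rec u (y # w)" "(edit1 ^^ k2) u (y # w)" using 3(2) by blast
  obtain k3 where k3: "k3 \<le> lev_rec (x # u) w" "(edit1 ^^ k3) (x # u) w" using 3(3) by blast
  have copy: "(edit1 ^^ k1) (x # u) (x # w)"
    using relpowp_edit1_append_context[OF k1(2), of "[x]" "[]"] by simp
  have match: "\<exists>k \<le> lev_rec u w + (if x = y then 0 else 1). (edit1 ^^ k) (x # u) (y # w)"
  proof (cases "x = y")
    case False
    have "(edit1 ^^ Suc k1) (x # u) (y # w)"
      using copy edit1_Cons_Cons by (rule relpowp_Suc_I)
    then show ?thesis using False k1(1) by (intro exI[of _ "Suc k1"]) simp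
  qed (use copy k1(1) in auto)
  have "(edit1 ^^ Suc k2) (x # u) (y # w)"
    using edit1_delete_Cons k2(2) by (rule relpowp_Suc_I2)
  then have delete: "\<exists>k \<le> lev_rec u (y # w) + 1. (edit1 ^^ k) (x # u) (y # w)"
    using k2(1) by (intro exI[of _ "Suc k2"]) simp
  have "(edit1 ^^ Suc k3) (x # u) (y # w)"
    using k3(2) edit1_insert_Cons by (rule relpowp_Suc_I)
  then have insert: "\<exists>k \<le> lev_rec (x # u) w + 1. (edit1 ^^ k) (x # u) (y # w)"
    using k3(1) by (intro exI[of _ "Suc k3"]) simp
  show ?case
    unfolding lev_rec.simps min_def using match delete insert by (simp split: if_split)
qed

lemma lev_eq_lev_rec: "lev u v = lev_rec u v"
proof -
  obtain k where k: "k \<le> lev_rec u v" "(edit1 ^^ k) u v" using relpowp_edit1_lev_rec by blast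
  have "lev u v \<le> k" unfolding lev_def using k(2) by (rule Least_le)
  moreover have "(edit1 ^^ lev u v) u v" unfolding lev_def using k(2) by (rule LeastI)
  ultimately show ?thesis using lev_rec_le_relpowp k(1) by (meson le_antisym le_trans)
qed

lemma relpowp_edit1_lev: "(edit1 ^^ lev u v) u v"
  unfolding lev_def by (rule LeastI_ex) (use relpowp_edit1_lev_rec in blast)

lemma lev_le_relpowp: "(edit1 ^^ k) u v \<Longrightarrow> lev u v \<le> k"
  unfolding lev_eq_lev_rec by (rule lev_rec_le_relpowp)

lemma lev_Nil_right [simp]: "lev u [] = length u"
  and lev_self [simp]: "lev v v = 0"
  and lev_Cons_Cons:
    "lev (x # u) (y # w) =
       min (min (lev u w + (if x = y then 0 else 1)) (lev u (y # w) + 1)) (lev (x # u) w + 1)"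
  by (simp_all add: lev_eq_lev_rec)

lemma lev_Cons_left_le: "lev (b # s) w \<le> Suc (lev s w)"
  and lev_Cons_right_le: "lev u (y # w) \<le> Suc (lev u w)"
  by (simp_all add: lev_eq_lev_rec lev_rec_Cons_left_le lev_rec_Cons_right_le)

lemma lev_append_le: "lev (u1 @ u2) (w1 @ w2) \<le> lev u1 w1 + lev u2 w2"
proof -
  have "(edit1 ^^ lev u1 w1) (u1 @ u2) (w1 @ u2)"
    using relpowp_edit1_append_context[OF relpowp_edit1_lev[of u1 w1], of "[]" u2] by simp
  moreover have "(edit1 ^^ lev u2 w2) (w1 @ u2) (w1 @ w2)"
    using relpowp_edit1_append_context[OF relpowp_edit1_lev[of u2 w2], of w1 "[]"] by simp
  ultimately have "(edit1 ^^ (lev u1 w1 + lev u2 w2)) (u1 @ u2) (w1 @ w2)"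
    unfolding relpowp_add by auto
  then show ?thesis by (rule lev_le_relpowp)
qed

lemma edit1_rev:
  assumes "edit1 u v"
  shows "edit1 (rev u) (rev v)"
proof -
  from assms consider
      (insert) p s b where "u = p @ s" "v = p @ b # s"
    | (delete) p s b where "u = p @ b # s" "v = p @ s"
    | (subst) p s b c where "u = p @ b # s" "v = p @ c # s"
    unfolding edit1_def by blast
  then show ?thesis
  proof cases
    case insert
    then show ?thesis unfolding edit1_def
      by (intro disjI1 exI[of _ "rev s"] exI[of _ "rev p"] exI[of _ b]) simp
  next
    case delete
    then show ?thesis unfolding edit1_def
      by (intro disjI2 disjI1 exI[of _ "rev s"] exI[of _ "rev p"] exI[of _ b]) simp
  next
    case subst
    then show ?thesis unfolding edit1_def
      by (intro disjI2 exI[of _ "rev s"] exI[of _ "rev p"] exI[of _ b] exI[of _ c]) simp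
  qed
qed

lemma relpowp_edit1_rev: "(edit1 ^^ k) u v \<Longrightarrow> (edit1 ^^ k) (rev u) (rev v)"
proof (induction k arbitrary: v)
  case (Suc k)
  then obtain w where "(edit1 ^^ k) u w" "edit1 w v" by (blast elim: relpowp_Suc_E)
  then show ?case using Suc.IH edit1_rev by (blast intro: relpowp_Suc_I)
qed simp

lemma lev_rev [simp]: "lev (rev u) (rev v) = lev u v"
proof -
  have le: "lev (rev u) (rev v) \<le> lev u v" for u v :: "'a list"
    by (rule lev_le_relpowp[OF relpowp_edit1_rev[OF relpowp_edit1_lev]])
  show ?thesis using le[of u v] le[of "rev u" "rev v"] by simp
qed

lemma lev_snoc_snoc:
  "lev (u @ [x]) (w @ [y]) =
     min (min (lev u w + (if x = y then 0 else 1)) (lev u (w @ [y]) + 1)) (lev (u @ [x]) w + 1)"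
  using lev_Cons_Cons[of x "rev u" y "rev w"]
  by (metis lev_rev rev.simps(2) rev_rev_ident)

lemma lev_prefix_le_lev_append: "\<exists>k \<le> length w. lev u (take k w) \<le> lev (u @ s) w"
proof (induction u arbitrary: w)
  case Nil
  show ?case by (intro exI[of _ 0]) simp
next
  case (Cons x u)
  note outer = Cons.IH
  show ?case
  proof (induction w)
    case Nil
    show ?case by (intro exI[of _ 0]) simp
  next
    case (Cons y w)
    have match: "\<exists>k \<le> length (y # w). lev (x # u) (take k (y # w))
                   \<le> lev (u @ s) w + (if x = y then 0 else 1)"
    proof -
      obtain k where "k \<le> length w" "lev u (take k w) \<le> lev (u @ s) w" using outer by blast
      then show ?thesis by (intro exI[of _ "Suc k"]) (auto simp: lev_Cons_Cons)
    qed
    have delete: "\<exists>k \<le> length (y # w). lev (x # u) (take k (y # w)) \<le> lev (u @ s) (y # w) + 1"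
    proof -
      obtain k where "k \<le> length (y # w)" "lev u (take k (y # w)) \<le> lev (u @ s) (y # w)"
        using outer by blast
      then show ?thesis using lev_Cons_left_le[of x u "take k (y # w)"] by fastforce
    qed
    have insert: "\<exists>k \<le> length (y # w). lev (x # u) (take k (y # w)) \<le> lev (x # u @ s) w + 1"
    proof -
      obtain k where "k \<le> length w" "lev (x # u) (take k w) \<le> lev (x # u @ s) w"
        using Cons.IH by auto
      then show ?thesis using lev_Cons_right_le[of "x # u" y "take k w"]
        by (intro exI[of _ "Suc k"]) auto
    qed
    show ?case
      using match delete insert by (auto simp: lev_Cons_Cons min_def)
  qed
qed

lemma Suc_le_lev_snoc_take:
  assumes lower: "\<And>j. j \<le> length y \<Longrightarrow> m \<le> lev p (take j y)"
    and no_match: "\<not> (\<exists>j < length y. lev p (take j y) = m \<and> y ! j = a)"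
    and "k \<le> length y"
  shows "Suc m \<le> lev (p @ [a]) (take k y)"
  using \<open>k \<le> length y\<close>
proof (induction k)
  case 0
  then show ?case using lower[of 0] by simp
next
  case (Suc k)
  then have k: "k < length y" by simp
  have "Suc m \<le> lev p (take k y) + (if a = y ! k then 0 else 1)"
    using lower[of k] no_match k by (cases "a = y ! k") force+
  then show ?case
    using Suc lower[of "Suc k"] unfolding take_Suc_conv_app_nth[OF k] lev_snoc_snoc by simp
qed

lemma mval_le: "j \<le> length y \<Longrightarrow> mval p y \<le> lev p (take j y)"
  unfolding mval_def by (rule Min_le) auto

lemma mval_attained: "\<exists>j \<le> length y. lev p (take j y) = mval p y"
proof -
  have "mval p y \<in> {lev p (take j y) | j. j \<le> length y}"
    unfolding mval_def by (rule Min_in) auto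
  then show ?thesis by auto
qed

lemma mval_le_lev_append: "mval p y \<le> lev (p @ s) y"
  using lev_prefix_le_lev_append[of y p s] mval_le le_trans by blast

lemma Suc_mval_le_lev_append:
  assumes "\<not> (\<exists>j < length y. lev p (take j y) = mval p y \<and> y ! j = a)"
  shows "Suc (mval p y) \<le> lev (p @ a # s) y"
proof -
  obtain k where "k \<le> length y" "lev (p @ [a]) (take k y) \<le> lev ((p @ [a]) @ s) y"
    using lev_prefix_le_lev_append[of y "p @ [a]" s] by blast
  then show ?thesis
    using Suc_le_lev_snoc_take[OF mval_le assms] by fastforce
qed

lemma lev_append_le_take_drop: "lev (p @ s) y \<le> lev p (take j y) + lev s (drop j y)"
  using lev_append_le[of p s "take j y" "drop j y"] by simp

lemma Qstar_eqI:
  assumes "s \<in> lists \<Sigma>" "lev (p @ a # s) y \<le> d" and "\<And>s. d \<le> lev (p @ a # s) y"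
  shows "Qstar \<Sigma> y p a = - int d"
  unfolding Qstar_def
proof (rule Greatest_equality)
  show "\<exists>s \<in> lists \<Sigma>. - int d = - int (lev (p @ a # s) y)"
    using assms(1,2) assms(3)[of s] by (intro bexI[of _ s]) auto
qed (use assms(3) in auto)

lemma Qstar_eq_mval:
  assumes "y \<in> lists \<Sigma>" and "j < length y" "lev p (take j y) = mval p y" "y ! j = a"
  shows "Qstar \<Sigma> y p a = - int (mval p y)"
proof (rule Qstar_eqI)
  show "drop (Suc j) y \<in> lists \<Sigma>"
    using assms(1) by (auto dest: in_set_dropD)
  have "drop j y = a # drop (Suc j) y"
    using assms(2,4) by (metis Cons_nth_drop_Suc)
  then show "lev (p @ a # drop (Suc j) y) y \<le> mval p y"
    using lev_append_le_take_drop[of p "a # drop (Suc j) y" y j] assms(3) by simp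
qed (rule mval_le_lev_append)

lemma Qstar_eq_Suc_mval:
  assumes "y \<in> lists \<Sigma>" and "\<not> (\<exists>j < length y. lev p (take j y) = mval p y \<and> y ! j = a)"
  shows "Qstar \<Sigma> y p a = - int (Suc (mval p y))"
proof -
  obtain j where j: "j \<le> length y" "lev p (take j y) = mval p y"
    using mval_attained by blast
  show ?thesis
  proof (rule Qstar_eqI)
    show "drop j y \<in> lists \<Sigma>"
      using assms(1) by (auto dest: in_set_dropD)
    show "lev (p @ a # drop j y) y \<le> Suc (mval p y)"
      using lev_append_le_take_drop[of p "a # drop j y" y j] lev_Cons_left_le[of a "drop j y" "drop j y"] j(2)
      by simp
  qed (rule Suc_mval_le_lev_append[OF assms(2)])
qed

theorem mainTheorem3:
  fixes \<Sigma> :: "'a set" and ystar p :: "'a list" and a :: 'a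
  assumes "finite \<Sigma>" and "ystar \<in> lists \<Sigma>" and "p \<in> lists \<Sigma>" and "a \<in> \<Sigma>"
  shows "Qstar \<Sigma> ystar p a =
           (if \<exists>j < length ystar. lev p (take j ystar) = mval p ystar \<and> ystar ! j = a
            then - int (mval p ystar) else - int (mval p ystar) - 1) \<and>
         ((- int (lev p ystar) = - int (mval p ystar)) \<longleftrightarrow> lev p ystar = mval p ystar) \<and>
         (lev p ystar \<noteq> mval p ystar \<longrightarrow> - int (lev p ystar) \<le> - int (mval p ystar) - 1)"
proof -
  have Q: "Qstar \<Sigma> ystar p a =
             (if \<exists>j < length ystar. lev p (take j ystar) = mval p ystar \<and> ystar ! j = a
              then - int (mval p ystar) else - int (mval p ystar) - 1)"
    using Qstar_eq_mval[OF assms(2)] Qstar_eq_Suc_mval[OF assms(2)] by auto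
  have "mval p ystar \<le> lev p ystar"
    using mval_le[of "length ystar" ystar p] by simp
  then show ?thesis using Q by auto
qed

end
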